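(* Let $X$ be a $d$-complex, $-1\le i\le k<d$, $A\in C^k$ and $0<\eta<1$. Let $\sigma\in S^i_\eta(A)$, $t\in L_\eta(A,\sigma)$, $t'\in A$, and $p\in X(k+1)$ with $t\subset p$ and $t'\subset p$. Then either $t'\cap\sigma$ is a fat face (i.e. $t'\cap\sigma\in S^{|t'\cap\sigma|-1}_\eta(A)$) and $t'\in L_\eta(A,t'\cap\sigma)$, or $p\in\Upsilon_\eta(A)$.
   Context: A $d$-complex is a finite pure $d$-dimensional simplicial complex $X$ (faces are vertex sets, $\emptyset$ is the unique $(-1)$-face, $|\sigma|$ = number of vertices); $X(k)$ = set of $k$-faces; $C^k$ = $\mathbb{F}_2$-cochains identified with subsets of $X(k)$. Weight $w(\sigma)=\frac{|\{F\in X(d):\sigma\subset F\}|}{\binom{d+1}{|\sigma|}|X(d)|}$, norm $\|A\|=\sum_{\sigma\in A}w(\sigma)$. Link $X_\sigma=\{\tau\in X:\tau\cap\sigma=\emptyset,\tau\cup\sigma\in X\}$ with own norm $\|\cdot\|_\sigma$; localization $I_\sigma(A)=\{\tau\in X_\sigma:\tau\sqcup\sigma\in A\}$. Fat faces: $S^k_\eta(A)=A$ and for $i=k,\dots,0$, $S^{i-1}_\eta(A)=\{\sigma\in X(i-1):\|I_\sigma(S^i_\eta(A))\|_\sigma\ge\eta^{2^{k-i}}\}$. A dead-end is a pair $(\sigma,\sigma')$ with $\sigma,\sigma'\in S^j_\eta(A)$ for some $j$, $|\sigma\cap\sigma'|=|\sigma|-1$, and $\sigma\cap\sigma'\notin S^{j-1}_\eta(A)$;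 $\Upsilon_\eta(A)\subset X(k+1)$ is the set of $(k+1)$-faces containing $\sigma\cup\sigma'$ for some dead-end. For $\sigma\in S^i_\eta(A)$, $L_\eta(A,\sigma)=\{t\in A:\exists\,\sigma=\sigma_i\subset\dots\subset\sigma_k=t,\ \sigma_j\in S^j_\eta(A)\ \forall j\}$. *)

theory Defs
  imports Main "HOL-Library.Discrete_Functions" Complex_Main
begin

text \<open>Simplicial complexes are sets of (finite) vertex sets; dimensions are integers
  so that the empty face has dimension -1.\<close>

definition d_complex :: "'v set set \<Rightarrow> int \<Rightarrow> bool" where
  "d_complex X d \<longleftrightarrow> finite X \<and> d \<ge> -1 \<and> {} \<in> X \<and>
     (\<forall>\<sigma>\<in>X. finite \<sigma> \<and> int (card \<sigma>) \<le> d + 1) \<and>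
     (\<forall>\<sigma>\<in>X. \<forall>\<tau>. \<tau> \<subseteq> \<sigma> \<longrightarrow> \<tau> \<in> X) \<and>
     (\<forall>\<sigma>\<in>X. \<exists>F\<in>X. \<sigma> \<subseteq> F \<and> int (card F) = d + 1)"

definition faces :: "'v set set \<Rightarrow> int \<Rightarrow> 'v set set" where
  "faces X k = {\<sigma>\<in>X. int (card \<sigma>) = k + 1}"

definition wt :: "'v set set \<Rightarrow> int \<Rightarrow> 'v set \<Rightarrow> real" where
  "wt X d \<sigma> = real (card {F\<in>faces X d. \<sigma> \<subseteq> F}) /
      (real (nat (d + 1) choose card \<sigma>) * real (card (faces X d)))"

definition cnorm :: "'v set set \<Rightarrow> int \<Rightarrow> 'v set set \<Rightarrow> real" where
  "cnorm X d A = (\<Sum>\<sigma>\<in>A. wt X d \<sigma>)"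

definition link :: "'v set set \<Rightarrow> 'v set \<Rightarrow> 'v set set" where
  "link X \<sigma> = {\<tau>\<in>X. \<tau> \<inter> \<sigma> = {} \<and> \<tau> \<union> \<sigma> \<in> X}"

text \<open>Norm in the link of \<sigma>, which is a (d - |\<sigma>|)-complex.\<close>
definition lnorm :: "'v set set \<Rightarrow> int \<Rightarrow> 'v set \<Rightarrow> 'v set set \<Rightarrow> real" where
  "lnorm X d \<sigma> B = cnorm (link X \<sigma>) (d - int (card \<sigma>)) B"

definition loc :: "'v set set \<Rightarrow> 'v set \<Rightarrow> 'v set set \<Rightarrow> 'v set set" where
  "loc X \<sigma> A = {\<tau>\<in>link X \<sigma>. \<tau> \<union> \<sigma> \<in> A}"

text \<open>fat_aux m = S^{k-m}_\<eta>(A).\<close>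
fun fat_aux :: "'v set set \<Rightarrow> int \<Rightarrow> real \<Rightarrow> int \<Rightarrow> 'v set set \<Rightarrow> nat \<Rightarrow> 'v set set" where
  "fat_aux X d \<eta> k A 0 = A"
| "fat_aux X d \<eta> k A (Suc m) =
     {\<sigma>\<in>faces X (k - int m - 1).
        lnorm X d \<sigma> (loc X \<sigma> (fat_aux X d \<eta> k A m)) \<ge> \<eta> ^ (2 ^ m)}"

definition fat :: "'v set set \<Rightarrow> int \<Rightarrow> real \<Rightarrow> int \<Rightarrow> 'v set set \<Rightarrow> int \<Rightarrow> 'v set set" where
  "fat X d \<eta> k A j = (if j \<le> k then fat_aux X d \<eta> k A (nat (k - j)) else {})"

definition dead_end :: "'v set set \<Rightarrow> int \<Rightarrow> real \<Rightarrow> int \<Rightarrow> 'v set set \<Rightarrow> 'v set \<Rightarrow> 'v set \<Rightarrow> bool" where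
  "dead_end X d \<eta> k A \<sigma> \<sigma>' \<longleftrightarrow> (\<exists>j. \<sigma> \<in> fat X d \<eta> k A j \<and> \<sigma>' \<in> fat X d \<eta> k A j \<and>
     int (card (\<sigma> \<inter> \<sigma>')) = int (card \<sigma>) - 1 \<and> \<sigma> \<inter> \<sigma>' \<notin> fat X d \<eta> k A (j - 1))"

definition Upsilon :: "'v set set \<Rightarrow> int \<Rightarrow> real \<Rightarrow> int \<Rightarrow> 'v set set \<Rightarrow> 'v set set" where
  "Upsilon X d \<eta> k A = {p\<in>faces X (k + 1). \<exists>\<sigma> \<sigma>'. dead_end X d \<eta> k A \<sigma> \<sigma>' \<and> \<sigma> \<union> \<sigma>' \<subseteq> p}"

definition Lset :: "'v set set \<Rightarrow> int \<Rightarrow> real \<Rightarrow> int \<Rightarrow> 'v set set \<Rightarrow> int \<Rightarrow> 'v set \<Rightarrow> 'v set set" where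
  "Lset X d \<eta> k A i \<sigma> = {t\<in>A. \<exists>c :: int \<Rightarrow> 'v set. c i = \<sigma> \<and> c k = t \<and>
      (\<forall>j. i \<le> j \<and> j \<le> k \<longrightarrow> c j \<in> fat X d \<eta> k A j) \<and>
      (\<forall>j. i \<le> j \<and> j < k \<longrightarrow> c j \<subset> c (j + 1))}"

end

theory Submission
  imports Defs
begin

text \<open>Follow the chain \<sigma> = c i \<subset> \<dots> \<subset> c k = t of fat faces downwards and keep track of
  c j \<inter> t'. Since t and t' are facets of the same (k+1)-face p, intersecting with t' removes
  at most one vertex. Whenever it does remove one from a fat face, that face and its trace
  in t' form a pair of fat faces of the same dimension meeting in a codimension-one face:
  either this pair is a dead-end inside p, or the intersection is fat again and extends the
  fat chain ending in t' by one step. At j = i this yields the claim for t' \<inter> \<sigma>.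
  The argument is purely combinatorial: neither the weights, nor \<eta>, nor the axioms of a
  d-complex enter.\<close>

definition fat_path_from ::
    "'v set set \<Rightarrow> int \<Rightarrow> real \<Rightarrow> int \<Rightarrow> 'v set set \<Rightarrow> 'v set \<Rightarrow> 'v set \<Rightarrow> bool" where
  "fat_path_from X d \<eta> k A \<tau> t \<longleftrightarrow>
     \<tau> \<in> fat X d \<eta> k A (int (card \<tau>) - 1) \<and> t \<in> Lset X d \<eta> k A (int (card \<tau>) - 1) \<tau>"

lemma card_Int_facet:
  assumes "t \<subseteq> p" "card p = Suc (card t)" "x \<subseteq> p" "\<not> x \<subseteq> t"
  shows "card (x \<inter> t) + 1 = card x"
proof -
  have fin: "finite p" using assms(2) card.infinite by fastforce
  then have fx: "finite x" using assms(3) finite_subset by blast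
  have "card (p - t) = 1" using card_Diff_subset[of t p] assms(1,2) fin finite_subset by fastforce
  moreover have "x - t \<subseteq> p - t" using assms(3) by blast
  ultimately have "card (x - t) \<le> 1" using card_mono fin by (metis finite_Diff)
  moreover have "x - t \<noteq> {}" using assms(4) by blast
  then have "card (x - t) \<ge> 1" using fx by (simp add: Suc_leI card_gt_0_iff)
  ultimately have "card (x - t) = 1" by simp
  then show ?thesis using card_Int_Diff[OF fx, of t] by simp
qed

lemma faces_card_Suc: "t \<in> faces X k \<Longrightarrow> p \<in> faces X (k + 1) \<Longrightarrow> card p = Suc (card t)"
  by (simp add: faces_def)

lemma fat_top: "fat X d \<eta> k A k = A"
  by (simp add: fat_def)

lemma fat_in_faces:
  assumes "x \<in> fat X d \<eta> k A j" "A \<subseteq> faces X k"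
  shows "x \<in> faces X j \<and> j \<le> k"
proof -
  have jk: "j \<le> k" using assms(1) by (auto simp: fat_def split: if_splits)
  show ?thesis
  proof (cases "nat (k - j)")
    case 0
    then have "j = k" using jk by simp
    then show ?thesis using assms 0 by (auto simp: fat_def)
  next
    case (Suc m)
    then have "k - int m - 1 = j" using jk by simp
    then show ?thesis using assms(1) Suc jk by (auto simp: fat_def)
  qed
qed

lemma fat_card:
  "x \<in> fat X d \<eta> k A j \<Longrightarrow> A \<subseteq> faces X k \<Longrightarrow> int (card x) = j + 1"
  using fat_in_faces by (fastforce simp: faces_def)

lemma dead_end_or_Upsilon:
  assumes "a \<in> fat X d \<eta> k A j" "b \<in> fat X d \<eta> k A j"
    and "int (card (a \<inter> b)) = int (card a) - 1"
    and "a \<union> b \<subseteq> p" "p \<in> faces X (k + 1)"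
  shows "a \<inter> b \<in> fat X d \<eta> k A (j - 1) \<or> p \<in> Upsilon X d \<eta> k A"
  using assms unfolding Upsilon_def dead_end_def by blast

lemma Lset_top: "t \<in> A \<Longrightarrow> t \<in> Lset X d \<eta> k A k t"
  unfolding Lset_def by (auto simp: fat_top intro!: exI[of _ "\<lambda>_. t"])

lemma Lset_prepend:
  assumes "t \<in> Lset X d \<eta> k A j g" "h \<in> fat X d \<eta> k A (j - 1)" "h \<subset> g" "j \<le> k"
  shows "t \<in> Lset X d \<eta> k A (j - 1) h"
proof -
  obtain c where c: "t \<in> A" "c j = g" "c k = t"
    "\<forall>l. j \<le> l \<and> l \<le> k \<longrightarrow> c l \<in> fat X d \<eta> k A l"
    "\<forall>l. j \<le> l \<and> l < k \<longrightarrow> c l \<subset> c (l + 1)"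
    using assms(1) unfolding Lset_def by blast
  let ?c = "c(j - 1 := h)"
  have "?c (j - 1) = h" "?c k = t" using c assms(4) by auto
  moreover have "\<forall>l. j - 1 \<le> l \<and> l \<le> k \<longrightarrow> ?c l \<in> fat X d \<eta> k A l"
    using c assms(2) by simp
  moreover have "\<forall>l. j - 1 \<le> l \<and> l < k \<longrightarrow> ?c l \<subset> ?c (l + 1)"
    using c assms(3,4) by simp
  ultimately show ?thesis using c(1) unfolding Lset_def by blast
qed

lemma fat_path_fromI:
  assumes "\<tau> \<in> fat X d \<eta> k A j" "t \<in> Lset X d \<eta> k A j \<tau>" "A \<subseteq> faces X k"
  shows "fat_path_from X d \<eta> k A \<tau> t"
  using assms fat_card[OF assms(1,3)] by (simp add: fat_path_from_def)

lemma fat_path_from_dead_end: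
  assumes A: "A \<subseteq> faces X k" and p: "p \<in> faces X (k + 1)"
    and a: "a \<in> fat X d \<eta> k A j" and g: "g \<in> fat X d \<eta> k A j"
    and L: "t \<in> Lset X d \<eta> k A j g"
    and "a \<union> g \<subseteq> p" "a \<inter> g = a \<inter> t" and codim: "card (a \<inter> g) + 1 = card a"
  shows "fat_path_from X d \<eta> k A (a \<inter> t) t \<or> p \<in> Upsilon X d \<eta> k A"
proof -
  have ca: "int (card a) = j + 1" and cg: "int (card g) = j + 1"
    using fat_card[OF a A] fat_card[OF g A] .
  have "a \<inter> g \<in> fat X d \<eta> k A (j - 1) \<or> p \<in> Upsilon X d \<eta> k A"
    using dead_end_or_Upsilon[OF a g _ assms(6) p] codim by simp
  moreover have "a \<inter> g \<subset> g" using ca cg codim by auto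
  moreover have "j \<le> k" using fat_in_faces[OF a A] by simp
  ultimately show ?thesis
    using Lset_prepend[OF L] fat_path_fromI[OF _ _ A] assms(7) by metis
qed

lemma fat_path_from_top:
  assumes A: "A \<subseteq> faces X k" and p: "p \<in> faces X (k + 1)"
    and "t \<in> A" "t' \<in> A" "t \<subseteq> p" "t' \<subseteq> p"
  shows "fat_path_from X d \<eta> k A (t \<inter> t') t' \<or> p \<in> Upsilon X d \<eta> k A"
proof (cases "t \<subseteq> t'")
  case True
  have faces: "t \<in> faces X k" "t' \<in> faces X k" using assms(3,4) A by auto
  then have "finite p" using faces_card_Suc[OF _ p] card.infinite by fastforce
  then have "finite t'" using assms(6) finite_subset by blast
  moreover have "card t = card t'" using faces by (simp add: faces_def)
  ultimately have "t \<inter> t' = t'" using True card_subset_eq[of t' t] by (simp add: Int_absorb1)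
  then show ?thesis using fat_path_fromI[OF _ Lset_top A] assms(4) by (simp add: fat_top)
next
  case False
  have codim: "card (t \<inter> t') + 1 = card t"
    using card_Int_facet[OF assms(6) faces_card_Suc[OF _ p] assms(5) False] A assms(4) by auto
  have "t \<in> fat X d \<eta> k A k" "t' \<in> fat X d \<eta> k A k" using assms(3,4) by (simp_all add: fat_top)
  from fat_path_from_dead_end[OF A p this Lset_top[OF assms(4)]] show ?thesis
    using assms(5,6) codim by simp
qed

lemma fat_path_from_descend:
  assumes A: "A \<subseteq> faces X k" and p: "p \<in> faces X (k + 1)"
    and t': "t' \<in> A" "t' \<subseteq> p"
    and a: "a \<in> fat X d \<eta> k A j" and b: "b \<in> fat X d \<eta> k A (j + 1)"
    and ab: "a \<subset> b" and "b \<subseteq> p"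
    and path: "fat_path_from X d \<eta> k A (b \<inter> t') t'"
  shows "fat_path_from X d \<eta> k A (a \<inter> t') t' \<or> p \<in> Upsilon X d \<eta> k A"
proof -
  have facet: "card p = Suc (card t')" using faces_card_Suc[OF _ p] A t'(1) by auto
  have ca: "int (card a) = j + 1" and cb: "int (card b) = j + 2"
    using fat_card[OF a A] fat_card[OF b A] by simp_all
  have jk: "j + 1 \<le> k" using fat_in_faces[OF b A] by simp
  have "finite p" using facet card.infinite by fastforce
  then have finite_b: "finite b" using assms(8) by (rule rev_finite_subset)
  consider "b \<subseteq> t'" | "a \<subseteq> t'" "\<not> b \<subseteq> t'" | "\<not> a \<subseteq> t'" using ab by blast
  then show ?thesis
  proof cases
    case 1
    then have "t' \<in> Lset X d \<eta> k A (j + 1) b"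
      using path cb by (simp add: fat_path_from_def Int_absorb2 add.commute)
    from Lset_prepend[OF this] have "t' \<in> Lset X d \<eta> k A j a" using a ab jk by simp
    then show ?thesis using 1 ab fat_path_fromI[OF a _ A] by (simp add: Int_absorb2)
  next
    case 2
    have "card (b \<inter> t') + 1 = card b" using card_Int_facet[OF t'(2) facet assms(8) 2(2)] .
    moreover have "a \<subseteq> b \<inter> t'" using 2 ab by blast
    moreover have "finite (b \<inter> t')" using finite_b by simp
    ultimately have "b \<inter> t' = a" using ca cb card_subset_eq[of "b \<inter> t'" a] by simp
    then show ?thesis using path 2(1) by (simp add: Int_absorb2)
  next
    case 3
    let ?g = "b \<inter> t'"
    have "\<not> b \<subseteq> t'" using 3 ab by blast
    then have "card ?g + 1 = card b" using card_Int_facet[OF t'(2) facet assms(8)] by blast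
    then have "int (card ?g) - 1 = j" using cb by simp
    then have "?g \<in> fat X d \<eta> k A j" "t' \<in> Lset X d \<eta> k A j ?g"
      using path cb by (simp_all add: fat_path_from_def)
    moreover have "a \<union> ?g \<subseteq> p" "a \<inter> ?g = a \<inter> t'" using ab assms(8) by blast+
    moreover have "card (a \<inter> ?g) + 1 = card a"
      using card_Int_facet[OF t'(2) facet _ 3] ab assms(8) \<open>a \<inter> ?g = a \<inter> t'\<close> by auto
    ultimately show ?thesis by (rule fat_path_from_dead_end[OF A p a])
  qed
qed

theorem mainTheorem9:
  fixes X :: "'v set set" and d i k :: int and A :: "'v set set" and \<eta> :: real
    and \<sigma> t t' p :: "'v set"
  assumes "d_complex X d"
    and "-1 \<le> i" and "i \<le> k" and "k < d"
    and "A \<subseteq> faces X k"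
    and "0 < \<eta>" and "\<eta> < 1"
    and "\<sigma> \<in> fat X d \<eta> k A i"
    and "t \<in> Lset X d \<eta> k A i \<sigma>"
    and "t' \<in> A"
    and "p \<in> faces X (k + 1)" and "t \<subseteq> p" and "t' \<subseteq> p"
  shows "(t' \<inter> \<sigma> \<in> fat X d \<eta> k A (int (card (t' \<inter> \<sigma>)) - 1) \<and>
          t' \<in> Lset X d \<eta> k A (int (card (t' \<inter> \<sigma>)) - 1) (t' \<inter> \<sigma>))
         \<or> p \<in> Upsilon X d \<eta> k A"
proof -
  obtain c where c: "t \<in> A" "c i = \<sigma>" "c k = t"
    "\<forall>j. i \<le> j \<and> j \<le> k \<longrightarrow> c j \<in> fat X d \<eta> k A j"
    "\<forall>j. i \<le> j \<and> j < k \<longrightarrow> c j \<subset> c (j + 1)"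
    using assms(9) unfolding Lset_def by blast
  have invariant:
    "c j \<subseteq> p \<and> (fat_path_from X d \<eta> k A (c j \<inter> t') t' \<or> p \<in> Upsilon X d \<eta> k A)"
    if "i \<le> j" "j \<le> k" for j
    using that(2,1)
  proof (induction j rule: int_le_induct)
    case base
    then show ?case using fat_path_from_top[OF assms(5,11) c(1) assms(10,12,13)] c(3) assms(12) by simp
  next
    case (step j)
    have sub: "c (j - 1) \<subset> c (j - 1 + 1)" using c(5)[rule_format, of "j - 1"] step by simp
    have "c (j - 1) \<in> fat X d \<eta> k A (j - 1)" "c (j - 1 + 1) \<in> fat X d \<eta> k A (j - 1 + 1)"
      using c(4)[rule_format, of "j - 1"] c(4)[rule_format, of j] step by simp_all
    from fat_path_from_descend[OF assms(5,11,10,13) this sub] show ?case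
      using step sub by auto
  qed
  have "c i \<inter> t' = t' \<inter> \<sigma>" using c(2) by blast
  then show ?thesis using invariant[OF order_refl assms(3)] by (simp add: fat_path_from_def)
qed

end
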